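(* For every $n$ and every $k\in[1,\lfloor\frac{n-1}{2}\rfloor]$ there exist Latin squares of order $n$ with inner distance $k$. Moreover, for any Latin square $L$ of order $n$ with inner distance $k$, $L$ is isotopic to Latin squares of every inner distance less than $k$, and these can be obtained from $L$ by symbol permutation alone.
   Context: A Latin square of order $n$ is an $n\times n$ matrix with entries from the symbol set $[1,n]=\{1,\dots,n\}$ in which every row and every column contains each symbol exactly once. The distance between symbols $a,b\in[1,n]$ is $\mathrm{dist}(a,b)=\min\{(a-b)\bmod n,\ (b-a)\bmod n\}$, with remainders taken in $[0,n-1]$. Two cells are adjacent if they share an edge horizontally or vertically. The inner distance of a Latin square is the minimum of $\mathrm{dist}$ over all pairs of symbols in adjacent cells. The maximum inner distance of a Latin square of order $n$ is $\lfloor\frac{n-1}{2}\rfloor$. A symbol permutation of a Latin square $L$ by a bijection $\sigma$ of $[1,n]$ is the Latin square whose $(i,j)$ entry is $\sigma(m_{i,j})$, where $m_{i,j}$ is the $(i,j)$ entry of $L$. Two Latin squares are isotopic if they differ by some combination of symbol permutation, row permutations, and column permutations. (Proof idea: repeatedly apply transpositions of symbols $(n,1)$ after a cyclic shift of symbols, each of which lowers the inner distance by exactly 1.) *)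

theory Defs
  imports Main
begin

definition latin_square :: "nat \<Rightarrow> (nat \<Rightarrow> nat \<Rightarrow> nat) \<Rightarrow> bool" where
  "latin_square n L \<longleftrightarrow>
     (\<forall>i<n. bij_betw (\<lambda>j. L i j) {0..<n} {1..n}) \<and>
     (\<forall>j<n. bij_betw (\<lambda>i. L i j) {0..<n} {1..n})"

definition sym_dist :: "nat \<Rightarrow> nat \<Rightarrow> nat \<Rightarrow> nat" where
  "sym_dist n a b = min (nat ((int a - int b) mod int n)) (nat ((int b - int a) mod int n))"

definition adjacent_pairs :: "nat \<Rightarrow> ((nat \<times> nat) \<times> (nat \<times> nat)) set" where
  "adjacent_pairs n =
     {((i, j), (i, j + 1)) | i j. i < n \<and> j + 1 < n} \<union>
     {((i, j), (i + 1, j)) | i j. i + 1 < n \<and> j < n}"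

definition inner_distance :: "nat \<Rightarrow> (nat \<Rightarrow> nat \<Rightarrow> nat) \<Rightarrow> nat" where
  "inner_distance n L =
     Min ((\<lambda>((i, j), (i', j')). sym_dist n (L i j) (L i' j')) ` adjacent_pairs n)"

definition isotopic :: "nat \<Rightarrow> (nat \<Rightarrow> nat \<Rightarrow> nat) \<Rightarrow> (nat \<Rightarrow> nat \<Rightarrow> nat) \<Rightarrow> bool" where
  "isotopic n L L' \<longleftrightarrow>
     (\<exists>\<sigma> \<alpha> \<beta>. bij_betw \<sigma> {1..n} {1..n} \<and> bij_betw \<alpha> {0..<n} {0..<n} \<and>
        bij_betw \<beta> {0..<n} {0..<n} \<and>
        (\<forall>i<n. \<forall>j<n. L' i j = \<sigma> (L (\<alpha> i) (\<beta> j))))"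

end

theory Submission
  imports Defs "HOL-Combinatorics.Transposition" "HOL-Number_Theory.Cong"
begin

(* Cyclic relabellings of the symbols
   are isometries, and the transposition (1 n) moves every symbol by at most 1, so a distance of
   at least 2 drops by at most 1 under it. If L has inner distance k >= 2, attained by adjacent
   symbols a and b, rotate the symbols so that a becomes n and b becomes k; after swapping 1 and n
   this pair is at distance k - 1 and no adjacent pair is closer. Iterating reaches every smaller
   inner distance, so for existence one square of maximal inner distance m = (n - 1) div 2
   suffices: the addition table of Z/n with rows and columns both listed in the order
   0, m + 1, 1, m + 2, 2, ..., in which consecutive entries differ by m or m + 1. *)

definition circ_norm :: "nat \<Rightarrow> int \<Rightarrow> int" where
  "circ_norm n x = min (x mod int n) (int n - x mod int n)"

lemma circ_norm_mod_cong: "x mod int n = y mod int n \<Longrightarrow> circ_norm n x = circ_norm n y"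
  unfolding circ_norm_def by simp

lemma circ_norm_uminus [simp]: "circ_norm n (- x) = circ_norm n x"
  unfolding circ_norm_def by (simp add: zmod_zminus1_eq_if min.commute)

lemma double_circ_norm_le: "n > 0 \<Longrightarrow> 2 * circ_norm n x \<le> int n"
  unfolding circ_norm_def by (simp add: min_def)

lemma circ_norm_eq: "0 \<le> x \<Longrightarrow> x < int n \<Longrightarrow> circ_norm n x = min x (int n - x)"
  unfolding circ_norm_def by simp

lemma circ_norm_add_le:
  assumes "n > 0" shows "circ_norm n (x + y) \<le> circ_norm n x + circ_norm n y"
proof -
  define r s where "r = x mod int n" and "s = y mod int n"
  have rs: "0 \<le> r" "r < int n" "0 \<le> s" "s < int n"
    using assms unfolding r_def s_def by simp_all
  have "(x + y) mod int n = (r + s) mod int n"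
    unfolding r_def s_def by (simp add: mod_add_eq)
  also have "\<dots> = (if r + s < int n then r + s else r + s - int n)"
  proof (cases "r + s < int n")
    case False
    have "(r + s) mod int n = (r + s - int n) mod int n"
      by (metis diff_add_cancel mod_add_self2)
    also have "\<dots> = r + s - int n"
      using False rs by (intro mod_pos_pos_trivial) simp_all
    finally show ?thesis using False by simp
  qed (use rs in simp)
  finally show ?thesis
    unfolding circ_norm_def r_def[symmetric] s_def[symmetric] using rs by auto
qed

lemma int_sym_dist:
  assumes "n > 0" shows "int (sym_dist n a b) = circ_norm n (int a - int b)"
proof -
  define r where "r = (int a - int b) mod int n"
  have r: "0 \<le> r" "r < int n" using assms unfolding r_def by simp_all
  have "(int b - int a) mod int n = (if r = 0 then 0 else int n - r)"
    unfolding r_def using zmod_zminus1_eq_if[of "int a - int b" "int n"] by simp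
  then show ?thesis
    unfolding sym_dist_def circ_norm_def r_def[symmetric] using r by (auto simp: min_def nat_le_eq_zle)
qed

lemma sym_dist_commute: "sym_dist n a b = sym_dist n b a"
  unfolding sym_dist_def by (simp add: min.commute)

lemma sym_dist_self [simp]: "sym_dist n a a = 0"
  unfolding sym_dist_def by simp

lemma sym_dist_mod_cong:
  assumes "n > 0" "(int a - int b) mod int n = (int c - int d) mod int n"
  shows "sym_dist n a b = sym_dist n c d"
proof -
  have "int (sym_dist n a b) = int (sym_dist n c d)"
    unfolding int_sym_dist[OF assms(1)] by (rule circ_norm_mod_cong[OF assms(2)])
  then show ?thesis by simp
qed

lemma sym_dist_triangle:
  assumes "n > 0" shows "sym_dist n a c \<le> sym_dist n a b + sym_dist n b c"
proof -
  have "circ_norm n (int a - int c) \<le> circ_norm n (int a - int b) + circ_norm n (int b - int c)"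
    using circ_norm_add_le[OF assms, of "int a - int b" "int b - int c"] by simp
  then show ?thesis by (simp add: int_sym_dist[OF assms, symmetric])
qed

lemma double_sym_dist_le: "n > 0 \<Longrightarrow> 2 * sym_dist n a b \<le> n"
  using double_circ_norm_le[of n "int a - int b"] int_sym_dist[of n a b] by simp

lemma sym_dist_eq_diff:
  assumes "a \<le> b" "2 * (b - a) \<le> n" shows "sym_dist n a b = b - a"
proof (cases "a = b")
  case False
  then have n: "n > 0" "int b - int a < int n" using assms by auto
  have "int (sym_dist n a b) = circ_norm n (- (int b - int a))"
    using int_sym_dist[OF n(1)] by simp
  also have "\<dots> = circ_norm n (int b - int a)"
    by (rule circ_norm_uminus)
  also have "\<dots> = int (b - a)"
    using assms n by (simp add: circ_norm_eq)
  finally show ?thesis by simp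
qed simp

lemma sym_dist_one_n: "n \<ge> 2 \<Longrightarrow> sym_dist n 1 n = 1"
  using sym_dist_mod_cong[of n 1 n 1 0] sym_dist_eq_diff[of 0 1 n] sym_dist_commute[of n 0 1]
  by simp

lemma sym_dist_orient:
  assumes "n > 0"
  obtains a b where "{a, b} = {x, y}" and "(int b - int a) mod int n = int (sym_dist n x y)"
proof -
  have "(int y - int x) mod int n = int (sym_dist n x y) \<or> (int x - int y) mod int n = int (sym_dist n x y)"
    using assms unfolding sym_dist_def by (simp add: min_def)
  then show ?thesis using that[of x y] that[of y x] by (auto simp: insert_commute)
qed

lemma bij_betw_if_inj_on_card_eq:
  assumes "inj_on f A" "f ` A \<subseteq> B" "finite B" "card A = card B"
  shows "bij_betw f A B"
  using assms card_image[OF assms(1)] by (simp add: bij_betw_def card_subset_eq)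

definition rotate_symbol :: "nat \<Rightarrow> nat \<Rightarrow> nat \<Rightarrow> nat" where
  "rotate_symbol n a x = nat ((int x - int a - 1) mod int n) + 1"

lemma rotate_symbol_mod:
  assumes "n > 0" shows "int (rotate_symbol n a x) mod int n = (int x - int a) mod int n"
proof -
  have "int (rotate_symbol n a x) = (int x - int a - 1) mod int n + 1"
    unfolding rotate_symbol_def using assms by simp
  then show ?thesis by (simp add: mod_add_left_eq)
qed

lemma rotate_symbol_self: "n > 0 \<Longrightarrow> rotate_symbol n a a = n"
  unfolding rotate_symbol_def by (simp add: zmod_minus1 nat_diff_distrib)

lemma rotate_symbol_eq:
  assumes "(int b - int a) mod int n = int k" "1 \<le> k"
  shows "rotate_symbol n a b = k"
proof -
  have "(int b - int a - 1) mod int n = ((int b - int a) mod int n - 1) mod int n"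
    by (simp add: mod_diff_left_eq)
  also have "\<dots> = int k - 1"
    using assms pos_mod_bound[of "int n" "int b - int a"]
    by (cases "n = 0") simp_all
  finally show ?thesis unfolding rotate_symbol_def using assms(2) by simp
qed

lemma sym_dist_rotate_symbol:
  assumes "n > 0" shows "sym_dist n (rotate_symbol n a u) (rotate_symbol n a v) = sym_dist n u v"
proof (rule sym_dist_mod_cong[OF assms])
  show "(int (rotate_symbol n a u) - int (rotate_symbol n a v)) mod int n = (int u - int v) mod int n"
    using mod_diff_cong[OF rotate_symbol_mod[OF assms, of a u] rotate_symbol_mod[OF assms, of a v]]
    by simp
qed

lemma inj_on_mod_atLeastAtMost: "inj_on (\<lambda>x. x mod n) {1..n::nat}"
proof (rule inj_onI)
  fix u v assume "u \<in> {1..n}" "v \<in> {1..n}" "u mod n = v mod n"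
  moreover have "x mod n = (if x = n then 0 else x)" if "x \<in> {1..n}" for x
    using that by auto
  ultimately show "u = v" by (auto split: if_splits)
qed

lemma bij_betw_rotate_symbol:
  assumes "n > 0" shows "bij_betw (rotate_symbol n a) {1..n} {1..n}"
proof (rule bij_betw_if_inj_on_card_eq)
  show "inj_on (rotate_symbol n a) {1..n}"
  proof (rule inj_onI)
    fix u v assume uv: "u \<in> {1..n}" "v \<in> {1..n}" "rotate_symbol n a u = rotate_symbol n a v"
    then have "(int u - int a) mod int n = (int v - int a) mod int n"
      using rotate_symbol_mod[OF assms] by metis
    then have "int u mod int n = int v mod int n"
      using mod_add_cong[of "int u - int a" "int n" "int v - int a" "int a" "int a"] by simp
    then have "u mod n = v mod n" by (metis of_nat_eq_iff zmod_int)
    then show "u = v" using inj_onD[OF inj_on_mod_atLeastAtMost] uv(1,2) by blast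
  qed
  have "nat ((int x - int a - 1) mod int n) < n" for x
    using assms by (simp add: nat_less_iff)
  then show "rotate_symbol n a ` {1..n} \<subseteq> {1..n}"
    unfolding rotate_symbol_def by (auto simp: Suc_le_eq)
qed simp_all

abbreviation swap_ends :: "nat \<Rightarrow> nat \<Rightarrow> nat" where
  "swap_ends n \<equiv> Transposition.transpose 1 n"

lemma sym_dist_swap_ends_le: "n \<ge> 2 \<Longrightarrow> sym_dist n x (swap_ends n x) \<le> 1"
  using sym_dist_one_n[of n] sym_dist_commute[of n 1 n]
  by (cases "x = 1"; cases "x = n") simp_all

lemma sym_dist_le_swap_ends:
  assumes n: "n \<ge> 2" and far: "2 \<le> sym_dist n u v"
  shows "sym_dist n u v \<le> sym_dist n (swap_ends n u) (swap_ends n v) + 1"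
proof -
  have n0: "n > 0" using n by simp
  have "\<not> (u \<in> {1, n} \<and> v \<in> {1, n})"
    using far sym_dist_one_n[OF n] sym_dist_commute[of n 1 n] by auto
  then consider "swap_ends n u = u" | "swap_ends n v = v" by auto
  then show ?thesis
  proof cases
    case 1
    then show ?thesis
      using sym_dist_triangle[OF n0, where a = u and b = "swap_ends n v" and c = v]
        sym_dist_swap_ends_le[OF n, of v] sym_dist_commute[of n v] by simp
  next
    case 2
    then show ?thesis
      using sym_dist_triangle[OF n0, where a = u and b = "swap_ends n u" and c = v]
        sym_dist_swap_ends_le[OF n, of u] by simp
  qed
qed

lemma finite_adjacent_pairs: "finite (adjacent_pairs n)"
proof (rule finite_subset)
  show "adjacent_pairs n \<subseteq> ({..<n} \<times> {..<n}) \<times> ({..<n} \<times> {..<n})"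
    unfolding adjacent_pairs_def by auto
qed simp

lemma inner_distance_le:
  "((i, j), (i', j')) \<in> adjacent_pairs n \<Longrightarrow> inner_distance n L \<le> sym_dist n (L i j) (L i' j')"
  unfolding inner_distance_def
  by (rule Min_le[OF finite_imageI[OF finite_adjacent_pairs]]) force

lemma inner_distance_attained:
  assumes "n \<ge> 2"
  obtains i j i' j' where "((i, j), (i', j')) \<in> adjacent_pairs n"
    and "sym_dist n (L i j) (L i' j') = inner_distance n L"
proof -
  have "((0, 0), (0, 1)) \<in> adjacent_pairs n"
    using assms unfolding adjacent_pairs_def by auto
  then have "inner_distance n L \<in> (\<lambda>((i, j), (i', j')). sym_dist n (L i j) (L i' j')) ` adjacent_pairs n"
    unfolding inner_distance_def by (intro Min_in finite_imageI finite_adjacent_pairs) blast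
  then show ?thesis using that by auto
qed

lemma inner_distance_eqI:
  assumes "\<And>i j i' j'. ((i, j), (i', j')) \<in> adjacent_pairs n \<Longrightarrow> k \<le> sym_dist n (L i j) (L i' j')"
    and "((i0, j0), (i1, j1)) \<in> adjacent_pairs n" and "sym_dist n (L i0 j0) (L i1 j1) = k"
  shows "inner_distance n L = k"
  unfolding inner_distance_def
proof (rule Min_eqI[OF finite_imageI[OF finite_adjacent_pairs]])
  show "k \<in> (\<lambda>((i, j), (i', j')). sym_dist n (L i j) (L i' j')) ` adjacent_pairs n"
    using assms(2,3) by force
qed (use assms(1) in auto)

lemma sym_dist_swap_ends_rotate_symbol:
  assumes diff: "(int b - int a) mod int n = int (Suc k)" and k: "1 \<le> k" "2 * Suc k \<le> n"
  shows "sym_dist n (swap_ends n (rotate_symbol n a a)) (swap_ends n (rotate_symbol n a b)) = k"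
proof -
  have "swap_ends n (rotate_symbol n a a) = 1" using rotate_symbol_self[of n a] k by simp
  moreover have "swap_ends n (rotate_symbol n a b) = Suc k" using rotate_symbol_eq[OF diff] k by simp
  ultimately show ?thesis using sym_dist_eq_diff[of 1 "Suc k" n] k by simp
qed

lemma inner_distance_decrement:
  assumes n: "n \<ge> 2" and k: "inner_distance n L = Suc k" "1 \<le> k"
  shows "\<exists>\<sigma>. bij_betw \<sigma> {1..n} {1..n} \<and> inner_distance n (\<lambda>a b. \<sigma> (L a b)) = k"
proof -
  have n0: "n > 0" using n by simp
  obtain i0 j0 i1 j1 where adj: "((i0, j0), (i1, j1)) \<in> adjacent_pairs n"
    and "sym_dist n (L i0 j0) (L i1 j1) = inner_distance n L"
    by (rule inner_distance_attained[OF n])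
  then have att: "sym_dist n (L i0 j0) (L i1 j1) = Suc k" using k(1) by simp
  obtain a b where ab: "{a, b} = {L i0 j0, L i1 j1}"
    and diff: "(int b - int a) mod int n = int (Suc k)"
    using sym_dist_orient[OF n0, of "L i0 j0" "L i1 j1"] att by metis
  have half: "2 * Suc k \<le> n" using double_sym_dist_le[OF n0, of "L i0 j0" "L i1 j1"] att by simp
  define \<sigma> where "\<sigma> = swap_ends n \<circ> rotate_symbol n a"
  have "sym_dist n (\<sigma> a) (\<sigma> b) = k"
    unfolding \<sigma>_def using sym_dist_swap_ends_rotate_symbol[OF diff k(2) half] by simp
  then have att': "sym_dist n (\<sigma> (L i0 j0)) (\<sigma> (L i1 j1)) = k"
    using ab by (auto simp: doubleton_eq_iff sym_dist_commute)
  have "k \<le> sym_dist n (\<sigma> (L i j)) (\<sigma> (L i' j'))"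
    if "((i, j), (i', j')) \<in> adjacent_pairs n" for i j i' j'
  proof -
    have "Suc k \<le> sym_dist n (rotate_symbol n a (L i j)) (rotate_symbol n a (L i' j'))"
      using inner_distance_le[OF that, of L] k(1) sym_dist_rotate_symbol[OF n0] by simp
    moreover from this have "sym_dist n (rotate_symbol n a (L i j)) (rotate_symbol n a (L i' j'))
        \<le> sym_dist n (\<sigma> (L i j)) (\<sigma> (L i' j')) + 1"
      unfolding \<sigma>_def using sym_dist_le_swap_ends[OF n] k(2) by simp
    ultimately show ?thesis by linarith
  qed
  moreover have "bij_betw \<sigma> {1..n} {1..n}"
    unfolding \<sigma>_def using bij_betw_rotate_symbol[OF n0] n
    by (intro bij_betw_trans[of _ _ "{1..n}"]) simp_all
  ultimately show ?thesis using inner_distance_eqI[OF _ adj att'] by blast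
qed

lemma exists_symbol_perm_inner_distance:
  assumes n: "n \<ge> 2" and j: "1 \<le> j" "j \<le> inner_distance n L"
  shows "\<exists>\<sigma>. bij_betw \<sigma> {1..n} {1..n} \<and> inner_distance n (\<lambda>a b. \<sigma> (L a b)) = j"
proof -
  have "\<exists>\<sigma>. bij_betw \<sigma> {1..n} {1..n} \<and> inner_distance n (\<lambda>a b. \<sigma> (L a b)) = j"
    if "inner_distance n L = k" "j \<le> k" for k L
    using that
  proof (induction k arbitrary: L)
    case 0
    then show ?case using j by simp
  next
    case (Suc k)
    show ?case
    proof (cases "j = Suc k")
      case True
      then show ?thesis using Suc.prems(1) by (intro exI[of _ "\<lambda>x. x"]) (simp add: bij_betw_def)
    next
      case False
      then have "j \<le> k" "1 \<le> k" using Suc.prems(2) j by auto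
      obtain \<sigma> where \<sigma>: "bij_betw \<sigma> {1..n} {1..n}" "inner_distance n (\<lambda>a b. \<sigma> (L a b)) = k"
        using inner_distance_decrement[OF n Suc.prems(1) \<open>1 \<le> k\<close>] by blast
      obtain \<tau> where \<tau>: "bij_betw \<tau> {1..n} {1..n}" "inner_distance n (\<lambda>a b. \<tau> (\<sigma> (L a b))) = j"
        using Suc.IH[OF \<sigma>(2) \<open>j \<le> k\<close>] by blast
      show ?thesis
        using bij_betw_trans[OF \<sigma>(1) \<tau>(1)] \<tau>(2) unfolding comp_def
        by (intro exI[of _ "\<lambda>x. \<tau> (\<sigma> x)"]) simp
    qed
  qed
  then show ?thesis using j(2) by blast
qed

lemma latin_square_symbol_perm:
  assumes "latin_square n L" "bij_betw \<sigma> {1..n} {1..n}"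
  shows "latin_square n (\<lambda>a b. \<sigma> (L a b))"
  using assms bij_betw_trans[of _ "{0..<n}" "{1..n}" \<sigma> "{1..n}"]
  unfolding latin_square_def by (auto simp: comp_def)

lemma isotopic_symbol_perm:
  "bij_betw \<sigma> {1..n} {1..n} \<Longrightarrow> isotopic n L (\<lambda>a b. \<sigma> (L a b))"
  unfolding isotopic_def by (intro exI[of _ \<sigma>] exI[of _ id]) simp

(* With m = (n - 1) div 2 this lists {0..<n} as 0, m + 1, 1, m + 2, 2, ... *)
definition zigzag :: "nat \<Rightarrow> nat \<Rightarrow> nat" where
  "zigzag n j = j div 2 + (j mod 2) * ((n - 1) div 2 + 1)"

lemma bij_betw_zigzag: "bij_betw (zigzag n) {0..<n} {0..<n}"
proof (rule bij_betw_if_inj_on_card_eq)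
  have even_iff: "even x \<longleftrightarrow> zigzag n x \<le> (n - 1) div 2" if "x < n" for x
  proof (cases "even x")
    case True
    then show ?thesis using that unfolding zigzag_def by (simp add: div_le_mono)
  next
    case False
    then show ?thesis unfolding zigzag_def by (simp add: odd_iff_mod_2_eq_one)
  qed
  show "inj_on (zigzag n) {0..<n}"
  proof (rule inj_onI)
    fix x y assume "x \<in> {0..<n}" "y \<in> {0..<n}" and eq: "zigzag n x = zigzag n y"
    then have "x mod 2 = y mod 2" using even_iff by (simp add: mod2_eq_if)
    moreover from this have "x div 2 = y div 2" using eq unfolding zigzag_def by simp
    ultimately show "x = y" by (metis div_mod_decomp)
  qed
  have "zigzag n x < n" if "x < n" for x
  proof (cases "even x")
    case False
    then have "x mod 2 = 1" by presburger
    then show ?thesis using that unfolding zigzag_def by simp presburger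
  qed (use that in \<open>auto simp: zigzag_def\<close>)
  then show "zigzag n ` {0..<n} \<subseteq> {0..<n}" by auto
qed simp_all

lemma circ_norm_zigzag_step:
  assumes "n \<ge> 2"
  shows "circ_norm n (int (zigzag n t) - int (zigzag n (Suc t))) =
    (if even t then int n - int ((n - 1) div 2) - 1 else int ((n - 1) div 2))"
proof -
  define m where "m = (n - 1) div 2"
  have m: "2 * m + 1 \<le> n" "n \<le> 2 * m + 2" unfolding m_def using assms by auto
  show ?thesis
  proof (cases "even t")
    case True
    then have "int (zigzag n t) - int (zigzag n (Suc t)) = - int (m + 1)"
      unfolding zigzag_def m_def by (auto elim!: evenE)
    then have "circ_norm n (int (zigzag n t) - int (zigzag n (Suc t))) = circ_norm n (int (m + 1))"
      by (metis circ_norm_uminus)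
    also have "\<dots> = min (int (m + 1)) (int n - int (m + 1))"
      using m assms by (intro circ_norm_eq) auto
    finally show ?thesis using True m unfolding m_def[symmetric] by simp
  next
    case False
    then have "int (zigzag n t) - int (zigzag n (Suc t)) = int m"
      unfolding zigzag_def m_def by (auto elim!: oddE)
    then show ?thesis using False m unfolding m_def[symmetric] by (simp add: circ_norm_eq)
  qed
qed

definition zigzag_square :: "nat \<Rightarrow> nat \<Rightarrow> nat \<Rightarrow> nat" where
  "zigzag_square n i j = (zigzag n i + zigzag n j) mod n + 1"

lemma bij_betw_add_mod_Suc:
  fixes c n :: nat shows "bij_betw (\<lambda>x. (c + x) mod n + 1) {0..<n} {1..n}"
proof (rule bij_betw_if_inj_on_card_eq)
  show "inj_on (\<lambda>x. (c + x) mod n + 1) {0..<n}"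
  proof (rule inj_onI)
    fix x y assume "x \<in> {0..<n}" "y \<in> {0..<n}" "(c + x) mod n + 1 = (c + y) mod n + 1"
    then show "x = y"
      using cong_less_modulus_unique_nat[of x y n] by (simp add: cong_def[symmetric] cong_add_lcancel_nat)
  qed
  show "(\<lambda>x. (c + x) mod n + 1) ` {0..<n} \<subseteq> {1..n}"
    by (auto simp: Suc_le_eq)
qed simp_all

lemma latin_square_zigzag_square: "latin_square n (zigzag_square n)"
proof -
  have "bij_betw (\<lambda>j. (zigzag n i + zigzag n j) mod n + 1) {0..<n} {1..n}" for i
    using bij_betw_trans[OF bij_betw_zigzag bij_betw_add_mod_Suc] by (simp add: comp_def)
  then show ?thesis
    unfolding latin_square_def zigzag_square_def by (simp add: add.commute)
qed

lemma int_sym_dist_zigzag_square: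
  assumes "n > 0"
  shows "int (sym_dist n (zigzag_square n i j) (zigzag_square n i' j')) =
    circ_norm n ((int (zigzag n i) + int (zigzag n j)) - (int (zigzag n i') + int (zigzag n j')))"
proof -
  have sq: "int (zigzag_square n a b) mod int n = (int (zigzag n a) + int (zigzag n b) + 1) mod int n" for a b
  proof -
    have "int (zigzag_square n a b) = int (zigzag n a + zigzag n b) mod int n + 1"
      unfolding zigzag_square_def by (simp add: zmod_int)
    then show ?thesis by (simp add: mod_add_left_eq)
  qed
  have "(int (zigzag_square n i j) - int (zigzag_square n i' j')) mod int n =
    ((int (zigzag n i) + int (zigzag n j) + 1) - (int (zigzag n i') + int (zigzag n j') + 1)) mod int n"
    by (rule mod_diff_cong[OF sq sq])
  then show ?thesis
    unfolding int_sym_dist[OF assms] by (subst circ_norm_mod_cong) simp_all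
qed

lemma inner_distance_zigzag_square:
  assumes n: "n \<ge> 3" shows "inner_distance n (zigzag_square n) = (n - 1) div 2"
proof (rule inner_distance_eqI)
  have step: "(n - 1) div 2 \<le> sym_dist n (zigzag_square n i j) (zigzag_square n i' j')"
    if "int (zigzag n i) + int (zigzag n j) - (int (zigzag n i') + int (zigzag n j'))
        = int (zigzag n t) - int (zigzag n (Suc t))" for i j i' j' t
  proof -
    have "2 * ((n - 1) div 2) + 1 \<le> n" using n by presburger
    then have "int ((n - 1) div 2) \<le> circ_norm n (int (zigzag n t) - int (zigzag n (Suc t)))"
      using circ_norm_zigzag_step[of n t] n by (cases "even t") simp_all
    also have "\<dots> = int (sym_dist n (zigzag_square n i j) (zigzag_square n i' j'))"
      using int_sym_dist_zigzag_square[of n i j i' j'] n unfolding that by simp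
    finally show ?thesis by simp
  qed
  fix i j i' j' assume "((i, j), (i', j')) \<in> adjacent_pairs n"
  then consider "i' = i" "j' = Suc j" | "i' = Suc i" "j' = j"
    unfolding adjacent_pairs_def by auto
  then show "(n - 1) div 2 \<le> sym_dist n (zigzag_square n i j) (zigzag_square n i' j')"
    by cases (rule step; simp)+
next
  show "((0, 1), (0, 2)) \<in> adjacent_pairs n" using n unfolding adjacent_pairs_def by auto
  have "int (sym_dist n (zigzag_square n 0 1) (zigzag_square n 0 2)) =
    circ_norm n (int (zigzag n 1) - int (zigzag n (Suc 1)))"
    using int_sym_dist_zigzag_square[of n 0 1 0 2] n by (simp add: numeral_2_eq_2)
  also have "\<dots> = int ((n - 1) div 2)"
    using circ_norm_zigzag_step[of n 1] n by simp
  finally show "sym_dist n (zigzag_square n 0 1) (zigzag_square n 0 2) = (n - 1) div 2"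
    by simp
qed

theorem mainTheorem7:
  shows "(\<forall>n k::nat. 1 \<le> k \<and> k \<le> (n - 1) div 2 \<longrightarrow>
            (\<exists>L. latin_square n L \<and> inner_distance n L = k))
       \<and> (\<forall>n k L. 2 \<le> n \<and> latin_square n L \<and> inner_distance n L = k \<longrightarrow>
            (\<forall>j. 1 \<le> j \<and> j < k \<longrightarrow>
               (\<exists>\<sigma>. bij_betw \<sigma> {1..n} {1..n} \<and>
                  latin_square n (\<lambda>a b. \<sigma> (L a b)) \<and>
                  isotopic n L (\<lambda>a b. \<sigma> (L a b)) \<and>
                  inner_distance n (\<lambda>a b. \<sigma> (L a b)) = j)))"
proof (intro conjI allI impI)
  fix n k :: nat assume k: "1 \<le> k \<and> k \<le> (n - 1) div 2"
  then have n: "n \<ge> 3" by linarith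
  obtain \<sigma> where "bij_betw \<sigma> {1..n} {1..n}" "inner_distance n (\<lambda>a b. \<sigma> (zigzag_square n a b)) = k"
    using exists_symbol_perm_inner_distance[of n k "zigzag_square n"]
      inner_distance_zigzag_square[OF n] n k by auto
  then show "\<exists>L. latin_square n L \<and> inner_distance n L = k"
    using latin_square_symbol_perm[OF latin_square_zigzag_square] by blast
next
  fix n k L j assume L: "2 \<le> n \<and> latin_square n L \<and> inner_distance n L = k" "1 \<le> j \<and> j < k"
  then obtain \<sigma> where "bij_betw \<sigma> {1..n} {1..n}" "inner_distance n (\<lambda>a b. \<sigma> (L a b)) = j"
    using exists_symbol_perm_inner_distance[of n j L] by auto
  then show "\<exists>\<sigma>. bij_betw \<sigma> {1..n} {1..n} \<and>
                  latin_square n (\<lambda>a b. \<sigma> (L a b)) \<and>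
                  isotopic n L (\<lambda>a b. \<sigma> (L a b)) \<and>
                  inner_distance n (\<lambda>a b. \<sigma> (L a b)) = j"
    using latin_square_symbol_perm isotopic_symbol_perm L(1) by blast
qed

end
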